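(* Let $0<q<1$. Then \[ \sum_{n=0}^{\infty}\frac{(1/2|q^{2})_{n}^{2}}{[n]_{q^{2}}!\,[n+1]_{q^{2}}!}\,q^{2n}=\frac{(1+q)^{2}q^{1/4}}{\pi_{q}}. \]
   Context: Let $0<q<1$ and write $q^{x}=e^{x\log q}$. $[z]_{q^2}=\frac{1-q^{2z}}{1-q^2}$; $[0]_{q^2}!=1$, $[n]_{q^2}!=\prod_{k=1}^n[k]_{q^2}$; $(1/2|q^2)_n=\prod_{k=0}^{n-1}[1/2+k]_{q^2}$ (empty product $=1$). With $(z;q)_\infty=\prod_{k\ge0}(1-zq^k)$, $\pi_q=(1-q^2)q^{1/4}\frac{(q^2;q^2)_\infty^2}{(q;q^2)_\infty^2}$. *)

theory Defs
  imports "HOL-Analysis.Analysis"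
begin

definition qnum2 :: "real \<Rightarrow> real \<Rightarrow> real" where
  "qnum2 q z = (1 - q powr (2 * z)) / (1 - q\<^sup>2)"

definition qfact2 :: "real \<Rightarrow> nat \<Rightarrow> real" where
  "qfact2 q n = (\<Prod>k = 1..n. qnum2 q (real k))"

definition qpoch_half :: "real \<Rightarrow> nat \<Rightarrow> real" where
  "qpoch_half q n = (\<Prod>k<n. qnum2 q (1/2 + real k))"

definition qpoch_inf :: "real \<Rightarrow> real \<Rightarrow> real" where
  "qpoch_inf z q = (\<Prod>k. (1 - z * q ^ k))"

definition pi_q :: "real \<Rightarrow> real" where
  "pi_q q = (1 - q\<^sup>2) * q powr (1/4) *
      (qpoch_inf (q\<^sup>2) (q\<^sup>2))\<^sup>2 / (qpoch_inf q (q\<^sup>2))\<^sup>2"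

end

theory Submission
  imports Defs
begin

text \<open>
  With \<open>t = q\<^sup>2\<close>, the series is Heine's \<open>\<^sub>2\<phi>\<^sub>1(q, q; t\<^sup>2; t, t)\<close>, so the identity is an instance of
  the \<open>q\<close>-Gauss summation
  \<open>\<^sub>2\<phi>\<^sub>1(a, b; c; t, c/(a b)) = (c/a; t)\<^sub>\<infinity> (c/b; t)\<^sub>\<infinity> / ((c; t)\<^sub>\<infinity> (c/(a b); t)\<^sub>\<infinity>)\<close>.
  Writing \<open>S(c)\<close> for the sum, a termwise computation and telescoping give the contiguous relation
  \<open>(1 - c) (1 - c/(a b)) S(c) = (1 - c/a) (1 - c/b) S(c t)\<close>. Iterating it \<open>N\<close> times and
  letting \<open>N \<rightarrow> \<infinity>\<close> proves the summation, because \<open>S(c t\<^sup>N) \<rightarrow> 1\<close>: the terms of \<open>S(c')\<close>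
  beyond the first are dominated by \<open>c'/c\<close> times those of the absolutely convergent \<open>S(c)\<close>.
  Finally \<open>\<pi>\<^sub>q\<close> is rewritten with \<open>(q t; t)\<^sub>\<infinity> = (q; t)\<^sub>\<infinity>/(1 - q)\<close> and
  \<open>(t\<^sup>2; t)\<^sub>\<infinity> = (t; t)\<^sub>\<infinity>/(1 - t)\<close>.
\<close>

definition qpoch :: "real \<Rightarrow> real \<Rightarrow> nat \<Rightarrow> real" where
  "qpoch z t n = (\<Prod>k<n. 1 - z * t ^ k)"

lemma qpoch_0 [simp]: "qpoch z t 0 = 1"
  by (simp add: qpoch_def)

lemma qpoch_Suc: "qpoch z t (Suc n) = qpoch z t n * (1 - z * t ^ n)"
  by (simp add: qpoch_def)

lemma qpoch_Suc_shift: "qpoch z t (Suc n) = (1 - z) * qpoch (z * t) t n"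
  unfolding qpoch_def by (subst prod.lessThan_Suc_shift) (simp add: mult.assoc)

lemma one_minus_mult_power_pos:
  fixes z t :: real
  assumes "\<bar>z\<bar> < 1" "0 \<le> t" "t \<le> 1"
  shows "0 < 1 - z * t ^ k"
proof -
  have "\<bar>z * t ^ k\<bar> \<le> \<bar>z\<bar>"
    using assms by (simp add: abs_mult mult_left_le power_le_one)
  with assms(1) show ?thesis by linarith
qed

lemma qpoch_pos:
  assumes "\<bar>z\<bar> < 1" "0 \<le> t" "t \<le> 1"
  shows "0 < qpoch z t n"
  unfolding qpoch_def using one_minus_mult_power_pos[OF assms] by (simp add: prod_pos)

lemma qpoch_antimono:
  assumes "z \<le> w" "w \<le> 1" "0 \<le> t" "t \<le> 1"
  shows "qpoch w t n \<le> qpoch z t n"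
  unfolding qpoch_def
proof (rule prod_mono)
  fix k
  have "w * t ^ k \<le> 1"
    using assms by (cases "0 \<le> w") (auto intro: mult_le_one power_le_one mult_nonpos_nonneg order.trans[of _ 0])
  moreover have "z * t ^ k \<le> w * t ^ k"
    using assms by (simp add: mult_right_mono)
  ultimately show "0 \<le> 1 - w * t ^ k \<and> 1 - w * t ^ k \<le> 1 - z * t ^ k"
    by simp
qed

lemma convergent_prod_qpoch:
  fixes z t :: real
  assumes "0 \<le> t" "t < 1"
  shows "convergent_prod (\<lambda>k. 1 - z * t ^ k)"
proof -
  have "summable (\<lambda>k. norm ((1 - z * t ^ k) - 1))"
    using assms by (simp add: abs_mult summable_geometric)
  then show ?thesis
    by (intro abs_convergent_prod_imp_convergent_prod summable_imp_abs_convergent_prod)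
qed

lemma qpoch_tendsto:
  assumes "0 \<le> t" "t < 1"
  shows "(\<lambda>n. qpoch z t n) \<longlonglongrightarrow> qpoch_inf z t"
  unfolding qpoch_def qpoch_inf_def
  using assms by (intro has_prod_imp_tendsto' convergent_prod_has_prod convergent_prod_qpoch)

lemma qpoch_inf_pos:
  assumes "\<bar>z\<bar> < 1" "0 \<le> t" "t < 1"
  shows "0 < qpoch_inf z t"
  unfolding qpoch_inf_def
  using assms by (intro less_0_prodinf convergent_prod_qpoch one_minus_mult_power_pos) auto

lemma qpoch_inf_shift:
  assumes "0 \<le> t" "t < 1"
  shows "qpoch_inf z t = (1 - z) * qpoch_inf (z * t) t"
proof (rule LIMSEQ_unique)
  show "(\<lambda>n. qpoch z t (Suc n)) \<longlonglongrightarrow> qpoch_inf z t"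
    using qpoch_tendsto[OF assms] by (rule LIMSEQ_Suc)
  show "(\<lambda>n. qpoch z t (Suc n)) \<longlonglongrightarrow> (1 - z) * qpoch_inf (z * t) t"
    unfolding qpoch_Suc_shift using qpoch_tendsto[OF assms] by (intro tendsto_intros)
qed

lemma summable_abs_of_ratio_tendsto:
  fixes f r :: "nat \<Rightarrow> real"
  assumes ratio: "\<And>n. f (Suc n) = f n * r n" and lim: "r \<longlonglongrightarrow> l" and "\<bar>l\<bar> < 1"
  shows "summable (\<lambda>n. \<bar>f n\<bar>)"
proof -
  have "(\<lambda>n. \<bar>r n\<bar>) \<longlonglongrightarrow> \<bar>l\<bar>" "\<bar>l\<bar> < (1 + \<bar>l\<bar>) / 2"
    using lim \<open>\<bar>l\<bar> < 1\<close> by (auto intro: tendsto_rabs)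
  from order_tendstoD(2)[OF this] obtain N
    where N: "\<And>n. n \<ge> N \<Longrightarrow> \<bar>r n\<bar> < (1 + \<bar>l\<bar>) / 2"
    unfolding eventually_sequentially by blast
  show ?thesis
  proof (rule summable_ratio_test[of "(1 + \<bar>l\<bar>) / 2" N])
    fix n assume "N \<le> n"
    then have "\<bar>f n\<bar> * \<bar>r n\<bar> \<le> \<bar>f n\<bar> * ((1 + \<bar>l\<bar>) / 2)"
      using N[of n] by (intro mult_left_mono) auto
    then show "norm \<bar>f (Suc n)\<bar> \<le> (1 + \<bar>l\<bar>) / 2 * norm \<bar>f n\<bar>"
      by (simp add: ratio abs_mult mult.commute)
  qed (use \<open>\<bar>l\<bar> < 1\<close> in simp)
qed

definition gauss_term :: "real \<Rightarrow> real \<Rightarrow> real \<Rightarrow> real \<Rightarrow> nat \<Rightarrow> real" where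
  "gauss_term a b c t n =
     qpoch a t n * qpoch b t n / (qpoch t t n * qpoch c t n) * (c / (a * b)) ^ n"

context
  fixes a b t :: real
  assumes t_pos: "0 < t" and t_less_1: "t < 1"
begin

private lemma t_bounds: "0 \<le> t" "t \<le> 1" "\<bar>t\<bar> < 1"
  using t_pos t_less_1 by auto

lemma gauss_term_0 [simp]: "gauss_term a b c t 0 = 1"
  by (simp add: gauss_term_def)

lemma gauss_term_Suc:
  assumes "\<bar>c\<bar> < 1"
  shows "gauss_term a b c t (Suc n) = gauss_term a b c t n *
    ((1 - a * t ^ n) * (1 - b * t ^ n) / ((1 - t ^ Suc n) * (1 - c * t ^ n)) * (c / (a * b)))"
proof -
  have "qpoch t t n > 0" "qpoch c t n > 0"
    using assms t_bounds by (intro qpoch_pos; simp)+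
  moreover have "1 - t * t ^ n > 0" "1 - c * t ^ n > 0"
    using assms t_bounds by (intro one_minus_mult_power_pos; simp)+
  ultimately show ?thesis
    unfolding gauss_term_def qpoch_Suc by (simp add: divide_simps)
qed

lemma gauss_term_shift:
  assumes "\<bar>c\<bar> < 1"
  shows "gauss_term a b (c * t) t n = gauss_term a b c t n * ((1 - c) * t ^ n / (1 - c * t ^ n))"
proof -
  have pos: "qpoch t t n > 0" "qpoch c t n > 0" "1 - c * t ^ n > 0" "1 - c > 0"
    using assms t_bounds by (intro qpoch_pos one_minus_mult_power_pos; simp)+ (use assms in simp)
  have shift: "qpoch (c * t) t n = qpoch c t n * ((1 - c * t ^ n) / (1 - c))"
    using qpoch_Suc_shift[of c t n] pos by (simp add: qpoch_Suc field_simps)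
  show ?thesis
    unfolding gauss_term_def shift
    using pos by (simp add: field_simps power_mult_distrib)
qed

lemma gauss_term_contiguous:
  assumes "\<bar>c\<bar> < 1" "a * b \<noteq> 0"
  shows "(1 - c) * (1 - c / (a * b)) * gauss_term a b c t n
           - (1 - c / a) * (1 - c / b) * gauss_term a b (c * t) t n
         = (1 - c) * ((1 - t ^ n) * gauss_term a b c t n
                      - (1 - t ^ Suc n) * gauss_term a b c t (Suc n))"
proof -
  have "1 - t * t ^ n \<noteq> 0" "1 - c * t ^ n \<noteq> 0"
    using assms t_bounds by (intro less_imp_neq[symmetric] one_minus_mult_power_pos; simp)+
  with assms show ?thesis
    unfolding gauss_term_shift[OF assms(1)] gauss_term_Suc[OF assms(1)]
    by (simp add: divide_simps) algebra
qed

lemma summable_abs_gauss_term: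
  assumes "\<bar>c\<bar> < 1" "\<bar>c\<bar> < \<bar>a * b\<bar>"
  shows "summable (\<lambda>n. \<bar>gauss_term a b c t n\<bar>)"
proof (rule summable_abs_of_ratio_tendsto)
  show "gauss_term a b c t (Suc n) = gauss_term a b c t n *
    ((1 - a * t ^ n) * (1 - b * t ^ n) / ((1 - t ^ Suc n) * (1 - c * t ^ n)) * (c / (a * b)))" for n
    by (rule gauss_term_Suc[OF assms(1)])
  have "0 < \<bar>a * b\<bar>"
    using assms(2) by linarith
  with assms(2) show "\<bar>c / (a * b)\<bar> < 1"
    by (simp add: abs_divide)
  have "(\<lambda>n. (1 - a * t ^ n) * (1 - b * t ^ n) / ((1 - t * t ^ n) * (1 - c * t ^ n)) * (c / (a * b)))
          \<longlonglongrightarrow> (1 - a * 0) * (1 - b * 0) / ((1 - t * 0) * (1 - c * 0)) * (c / (a * b))"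
    using t_bounds by (intro tendsto_intros) auto
  then show "(\<lambda>n. (1 - a * t ^ n) * (1 - b * t ^ n) / ((1 - t ^ Suc n) * (1 - c * t ^ n)) * (c / (a * b)))
          \<longlonglongrightarrow> c / (a * b)"
    by simp
qed

lemma gauss_sum_contiguous:
  assumes "\<bar>c\<bar> < 1" "\<bar>c\<bar> < \<bar>a * b\<bar>"
  shows "(1 - c) * (1 - c / (a * b)) * suminf (gauss_term a b c t)
         = (1 - c / a) * (1 - c / b) * suminf (gauss_term a b (c * t) t)"
proof -
  have "a * b \<noteq> 0"
    using assms(2) by auto
  have "\<bar>c * t\<bar> \<le> \<bar>c\<bar>"
    using t_bounds by (simp add: abs_mult mult_left_le)
  then have "\<bar>c * t\<bar> < 1" "\<bar>c * t\<bar> < \<bar>a * b\<bar>"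
    using assms by linarith+
  with assms have "summable (gauss_term a b c t)" "summable (gauss_term a b (c * t) t)"
    by (simp_all add: summable_rabs_cancel summable_abs_gauss_term)
  then have "(\<lambda>n. (1 - c) * (1 - c / (a * b)) * gauss_term a b c t n
                 - (1 - c / a) * (1 - c / b) * gauss_term a b (c * t) t n)
      sums ((1 - c) * (1 - c / (a * b)) * suminf (gauss_term a b c t)
            - (1 - c / a) * (1 - c / b) * suminf (gauss_term a b (c * t) t))"
    by (intro sums_diff sums_mult summable_sums)
  moreover have "(\<lambda>n. (1 - c) * ((1 - t ^ n) * gauss_term a b c t n
                                  - (1 - t ^ Suc n) * gauss_term a b c t (Suc n))) sums 0"
  proof -
    have "(\<lambda>n. (1 - t ^ n) * gauss_term a b c t n) \<longlonglongrightarrow> (1 - 0) * 0"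
      using t_bounds \<open>summable (gauss_term a b c t)\<close>
      by (intro tendsto_intros summable_LIMSEQ_zero) auto
    from sums_mult[OF telescope_sums'[OF this], of "1 - c"] show ?thesis
      by simp
  qed
  ultimately show ?thesis
    unfolding gauss_term_contiguous[OF assms(1) \<open>a * b \<noteq> 0\<close>] by (simp add: sums_iff)
qed

lemma gauss_term_abs_le:
  assumes "0 < c'" "c' \<le> c" "c < 1"
  shows "\<bar>gauss_term a b c' t n\<bar> \<le> \<bar>gauss_term a b c t n\<bar> * (c' / c) ^ n"
proof -
  define A where "A = \<bar>qpoch a t n * qpoch b t n\<bar> / qpoch t t n"
  have pos: "0 < qpoch t t n" "0 < qpoch c t n" "0 < qpoch c' t n"
    using assms t_bounds by (intro qpoch_pos; simp)+
  have abs_eq: "\<bar>gauss_term a b x t n\<bar> = A / qpoch x t n * (\<bar>x\<bar> / \<bar>a * b\<bar>) ^ n"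
    if "0 < qpoch x t n" for x
    using that pos by (simp add: gauss_term_def A_def abs_mult power_abs)
  have "qpoch c t n \<le> qpoch c' t n"
    using assms t_bounds by (intro qpoch_antimono) auto
  then have le: "A / qpoch c' t n * (c / \<bar>a * b\<bar>) ^ n \<le> A / qpoch c t n * (c / \<bar>a * b\<bar>) ^ n"
    using pos assms by (intro mult_right_mono divide_left_mono) (auto simp: A_def)
  have "\<bar>gauss_term a b c' t n\<bar> = A / qpoch c' t n * (c / \<bar>a * b\<bar>) ^ n * (c' / c) ^ n"
    using assms pos by (simp add: abs_eq power_mult_distrib[symmetric])
  also have "\<dots> \<le> A / qpoch c t n * (c / \<bar>a * b\<bar>) ^ n * (c' / c) ^ n"
    by (rule mult_right_mono[OF le]) (use assms in simp)
  also have "\<dots> = \<bar>gauss_term a b c t n\<bar> * (c' / c) ^ n"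
    using assms pos by (simp add: abs_eq)
  finally show ?thesis .
qed

lemma abs_gauss_sum_minus_one_le:
  assumes "0 < c'" "c' \<le> c" "c < 1" "c < \<bar>a * b\<bar>"
  shows "\<bar>suminf (gauss_term a b c' t) - 1\<bar> \<le> c' / c * ((\<Sum>n. \<bar>gauss_term a b c t n\<bar>) - 1)"
proof -
  have abs_c: "summable (\<lambda>n. \<bar>gauss_term a b c t n\<bar>)"
    using assms by (intro summable_abs_gauss_term) auto
  have abs_c': "summable (\<lambda>n. \<bar>gauss_term a b c' t n\<bar>)"
    using assms by (intro summable_abs_gauss_term) auto
  have bound: "\<bar>gauss_term a b c' t (Suc n)\<bar> \<le> c' / c * \<bar>gauss_term a b c t (Suc n)\<bar>" for n
  proof -
    have "(c' / c) ^ Suc n \<le> c' / c"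
      unfolding power_Suc by (rule mult_left_le) (use assms in \<open>auto simp: power_le_one\<close>)
    then have "\<bar>gauss_term a b c t (Suc n)\<bar> * (c' / c) ^ Suc n \<le> \<bar>gauss_term a b c t (Suc n)\<bar> * (c' / c)"
      by (rule mult_left_mono) simp
    with gauss_term_abs_le[OF assms(1-3), of "Suc n"] show ?thesis
      by (simp add: mult.commute)
  qed
  have abs_c_Suc: "summable (\<lambda>n. \<bar>gauss_term a b c t (Suc n)\<bar>)"
    using abs_c summable_Suc_iff[of "\<lambda>n. \<bar>gauss_term a b c t n\<bar>"] by simp
  have abs_c'_Suc: "summable (\<lambda>n. \<bar>gauss_term a b c' t (Suc n)\<bar>)"
    using abs_c' summable_Suc_iff[of "\<lambda>n. \<bar>gauss_term a b c' t n\<bar>"] by simp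
  have "\<bar>suminf (gauss_term a b c' t) - 1\<bar> = \<bar>\<Sum>n. gauss_term a b c' t (Suc n)\<bar>"
    using suminf_split_head[OF summable_rabs_cancel[OF abs_c']] by simp
  also have "\<dots> \<le> (\<Sum>n. \<bar>gauss_term a b c' t (Suc n)\<bar>)"
    using abs_c'_Suc by (rule summable_rabs)
  also have "\<dots> \<le> (\<Sum>n. c' / c * \<bar>gauss_term a b c t (Suc n)\<bar>)"
    using abs_c_Suc abs_c'_Suc bound by (intro suminf_le summable_mult)
  also have "\<dots> = c' / c * ((\<Sum>n. \<bar>gauss_term a b c t n\<bar>) - 1)"
    using suminf_split_head[OF abs_c] suminf_mult[OF abs_c_Suc, of "c' / c"] by simp
  finally show ?thesis .
qed

lemma gauss_sum_tendsto_1: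
  assumes "0 < c" "c < 1" "c < \<bar>a * b\<bar>"
  shows "(\<lambda>N. suminf (gauss_term a b (c * t ^ N) t)) \<longlonglongrightarrow> 1"
proof -
  define M where "M = (\<Sum>n. \<bar>gauss_term a b c t n\<bar>) - 1"
  have "c * t ^ N \<le> c * 1" for N
    using assms t_bounds by (intro mult_left_mono power_le_one) auto
  then have "\<forall>N. norm (suminf (gauss_term a b (c * t ^ N) t) - 1) \<le> t ^ N * M"
    using abs_gauss_sum_minus_one_le[of "c * t ^ _" c] assms t_pos by (simp add: M_def)
  moreover have "(\<lambda>N. t ^ N * M) \<longlonglongrightarrow> 0"
    using t_bounds by (intro tendsto_mult_left_zero LIMSEQ_power_zero) simp
  ultimately have "(\<lambda>N. suminf (gauss_term a b (c * t ^ N) t) - 1) \<longlonglongrightarrow> 0"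
    by (rule Lim_null_comparison[OF always_eventually])
  then show ?thesis
    by (simp add: LIM_zero_iff)
qed

lemma gauss_sum_iterate:
  assumes "0 < c" "c < 1" "c < \<bar>a * b\<bar>"
  shows "suminf (gauss_term a b c t) * (qpoch c t N * qpoch (c / (a * b)) t N)
         = qpoch (c / a) t N * qpoch (c / b) t N * suminf (gauss_term a b (c * t ^ N) t)"
proof (induction N)
  case 0
  then show ?case by simp
next
  case (Suc N)
  have "0 < c * t ^ N" "c * t ^ N \<le> c"
    using assms t_pos t_bounds by (simp_all add: mult_left_le power_le_one)
  then have "\<bar>c * t ^ N\<bar> < 1" "\<bar>c * t ^ N\<bar> < \<bar>a * b\<bar>"
    using assms by linarith+
  from gauss_sum_contiguous[OF this]
  have contiguous: "(1 - c * t ^ N) * (1 - c / (a * b) * t ^ N) * suminf (gauss_term a b (c * t ^ N) t)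
      = (1 - c / a * t ^ N) * (1 - c / b * t ^ N) * suminf (gauss_term a b (c * t ^ Suc N) t)"
    by (simp add: mult_ac)
  have "suminf (gauss_term a b c t) * (qpoch c t (Suc N) * qpoch (c / (a * b)) t (Suc N))
      = suminf (gauss_term a b c t) * (qpoch c t N * qpoch (c / (a * b)) t N)
        * ((1 - c * t ^ N) * (1 - c / (a * b) * t ^ N))"
    by (simp add: qpoch_Suc mult_ac)
  also have "\<dots> = qpoch (c / a) t N * qpoch (c / b) t N
        * ((1 - c * t ^ N) * (1 - c / (a * b) * t ^ N) * suminf (gauss_term a b (c * t ^ N) t))"
    unfolding Suc.IH by (simp add: mult_ac)
  also have "\<dots> = qpoch (c / a) t (Suc N) * qpoch (c / b) t (Suc N)
        * suminf (gauss_term a b (c * t ^ Suc N) t)"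
    unfolding contiguous by (simp add: qpoch_Suc mult_ac)
  finally show ?case .
qed

theorem q_gauss_sum:
  assumes "0 < c" "c < 1" "c < \<bar>a * b\<bar>"
  shows "gauss_term a b c t sums
           (qpoch_inf (c / a) t * qpoch_inf (c / b) t / (qpoch_inf c t * qpoch_inf (c / (a * b)) t))"
proof -
  have "0 < \<bar>a * b\<bar>"
    using assms by linarith
  with assms have "\<bar>c / (a * b)\<bar> < 1"
    by (simp add: abs_divide)
  then have pos: "0 < qpoch_inf c t" "0 < qpoch_inf (c / (a * b)) t"
    using assms t_bounds by (intro qpoch_inf_pos; simp)+
  have "(\<lambda>N. suminf (gauss_term a b c t) * (qpoch c t N * qpoch (c / (a * b)) t N))
          \<longlonglongrightarrow> suminf (gauss_term a b c t) * (qpoch_inf c t * qpoch_inf (c / (a * b)) t)"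
    using t_bounds by (intro tendsto_intros qpoch_tendsto) auto
  moreover have "(\<lambda>N. qpoch (c / a) t N * qpoch (c / b) t N * suminf (gauss_term a b (c * t ^ N) t))
          \<longlonglongrightarrow> qpoch_inf (c / a) t * qpoch_inf (c / b) t * 1"
    using t_bounds assms by (intro tendsto_intros qpoch_tendsto gauss_sum_tendsto_1) auto
  ultimately have "suminf (gauss_term a b c t) * (qpoch_inf c t * qpoch_inf (c / (a * b)) t)
                   = qpoch_inf (c / a) t * qpoch_inf (c / b) t"
    unfolding gauss_sum_iterate[OF assms] by (simp add: LIMSEQ_unique)
  moreover have "summable (gauss_term a b c t)"
    using assms by (simp add: summable_rabs_cancel summable_abs_gauss_term)
  ultimately show ?thesis
    using pos by (simp add: sums_iff field_simps)
qed

end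

lemma qnum2_of_nat:
  assumes "0 < q"
  shows "qnum2 q (real k) = (1 - (q\<^sup>2) ^ k) / (1 - q\<^sup>2)"
proof -
  have "2 * real k = real (2 * k)"
    by simp
  then have "q powr (2 * real k) = q ^ (2 * k)"
    using assms by (simp only: powr_realpow)
  then show ?thesis
    by (simp add: qnum2_def power_mult)
qed

lemma qnum2_half_plus_nat:
  assumes "0 < q"
  shows "qnum2 q (1/2 + real k) = (1 - q * (q\<^sup>2) ^ k) / (1 - q\<^sup>2)"
proof -
  have "2 * (1/2 + real k) = real (Suc (2 * k))"
    by simp
  then have "q powr (2 * (1/2 + real k)) = q ^ Suc (2 * k)"
    using assms by (simp only: powr_realpow)
  then show ?thesis
    by (simp add: qnum2_def power_mult)
qed

lemma qpoch_half_eq_qpoch: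
  assumes "0 < q"
  shows "qpoch_half q n = qpoch q (q\<^sup>2) n / (1 - q\<^sup>2) ^ n"
  using assms by (simp add: qpoch_half_def qpoch_def qnum2_half_plus_nat prod_dividef)

lemma qfact2_eq_qpoch:
  assumes "0 < q"
  shows "qfact2 q n = qpoch (q\<^sup>2) (q\<^sup>2) n / (1 - q\<^sup>2) ^ n"
proof -
  have "qfact2 q n = (\<Prod>k<n. qnum2 q (real (Suc k)))"
    unfolding qfact2_def by (rule prod.reindex_bij_witness[of _ Suc "\<lambda>k. k - 1"]) auto
  also have "\<dots> = (\<Prod>k<n. (1 - q\<^sup>2 * (q\<^sup>2) ^ k) / (1 - q\<^sup>2))"
    unfolding qnum2_of_nat[OF assms] by simp
  finally show ?thesis
    by (simp add: qpoch_def prod_dividef)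
qed

lemma qpoch_half_series_term_eq_gauss_term:
  assumes "0 < q" "q < 1"
  shows "(qpoch_half q n)\<^sup>2 / (qfact2 q n * qfact2 q (n + 1)) * q ^ (2 * n)
         = gauss_term q q (q\<^sup>2 * q\<^sup>2) (q\<^sup>2) n"
proof -
  define t where "t = q\<^sup>2"
  have t: "0 < t" "t < 1"
    using assms by (simp_all add: t_def power_less_one_iff)
  have "t * t < 1"
    using mult_strict_mono[of t 1 t 1] t by simp
  with t have pos: "0 < qpoch t t n" "0 < qpoch (t * t) t n"
    by (intro qpoch_pos; simp)+
  have "(t * t / (q * q)) ^ n = q ^ (2 * n)"
    using assms by (simp add: t_def power_mult power2_eq_square)
  then show ?thesis
    unfolding qpoch_half_eq_qpoch[OF assms(1)] qfact2_eq_qpoch[OF assms(1)] Suc_eq_plus1[symmetric]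
      qpoch_Suc_shift gauss_term_def t_def[symmetric]
    using pos t by (simp add: field_simps power2_eq_square)
qed

lemma pi_q_eq_qpoch_inf:
  assumes "0 < q" "q < 1"
  defines "t \<equiv> q\<^sup>2"
  shows "(1 + q)\<^sup>2 * q powr (1/4) / pi_q q
         = (qpoch_inf (q * t) t)\<^sup>2 / (qpoch_inf (t * t) t * qpoch_inf t t)"
proof -
  define A B where "A = qpoch_inf q t" and "B = qpoch_inf t t"
  have "q\<^sup>2 < 1"
    using assms by (simp add: power_less_one_iff)
  then have t: "0 \<le> t" "t < 1" "1 - q\<^sup>2 \<noteq> 0"
    by (simp_all add: t_def)
  then have "0 < A" "0 < B" "0 < q powr (1/4)"
    using assms by (simp_all add: A_def B_def qpoch_inf_pos)
  have qt: "qpoch_inf (q * t) t = A / (1 - q)" and tt: "qpoch_inf (t * t) t = B / (1 - t)"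
    using assms(2) t by (simp_all add: A_def B_def qpoch_inf_shift[of t q] qpoch_inf_shift[of t t])
  have pi: "pi_q q = (1 - t) * q powr (1/4) * B\<^sup>2 / A\<^sup>2"
    by (simp add: pi_q_def A_def B_def t_def)
  from \<open>0 < A\<close> \<open>0 < B\<close> \<open>0 < q powr (1/4)\<close> t assms show ?thesis
    unfolding qt tt pi B_def[symmetric] unfolding t_def by (simp add: divide_simps) algebra
qed

theorem mainTheorem5:
  fixes q :: real
  assumes "0 < q" and "q < 1"
  shows "(\<lambda>n. (qpoch_half q n)\<^sup>2 / (qfact2 q n * qfact2 q (n + 1)) * q ^ (2 * n))
           sums ((1 + q)\<^sup>2 * q powr (1/4) / pi_q q)"
proof -
  define t where "t = q\<^sup>2"
  have t: "0 < t" "t < 1" "t * t < 1"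
    using assms mult_strict_mono[of t 1 t 1] by (simp_all add: t_def power_less_one_iff)
  have "q * q = t" "t * t / q = q * t" "t * t / (q * q) = t"
    using assms by (simp_all add: t_def power2_eq_square)
  moreover have "gauss_term q q (t * t) t sums
      (qpoch_inf (t * t / q) t * qpoch_inf (t * t / q) t
       / (qpoch_inf (t * t) t * qpoch_inf (t * t / (q * q)) t))"
    using t \<open>q * q = t\<close> by (intro q_gauss_sum) auto
  ultimately have "gauss_term q q (t * t) t sums
               ((qpoch_inf (q * t) t)\<^sup>2 / (qpoch_inf (t * t) t * qpoch_inf t t))"
    by (simp add: power2_eq_square)
  then show ?thesis
    unfolding qpoch_half_series_term_eq_gauss_term[OF assms] pi_q_eq_qpoch_inf[OF assms]
      t_def[symmetric] .
qed

end
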